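(* Let $n>30$ with $n\equiv 0\pmod 6$, and let $\mathcal{H}$ and $\Pi$ be as defined in the context. Let $M$ be a maximal subgroup of $S_n$ that is imprimitive (i.e. the stabilizer of a partition of $\{1,\dots,n\}$ into $\ell$ blocks of size $k$, with $k\ell=n$, $k,\ell\ge 2$) and $M\notin\mathcal{H}$. Then $|M\cap\Pi|<|H\cap\Pi|$ for every $H\in\mathcal{H}$.
   Context: $S_n$ is the symmetric group on $\{1,\dots,n\}$, $n\equiv 0\pmod 6$. $\mathcal{H}$ consists of: all stabilizers in $S_n$ of partitions of $\{1,\dots,n\}$ into two blocks of size $n/2$ (a stabilizer may swap the blocks); $A_n$; and, for $1\le i\le n/3-1$, all setwise stabilizers of $i$-element subsets. $\Pi=\bigcup_{i=-1}^{n/3-1}\Pi_i$ where (cycle lengths listed account for all $n$ points): $\Pi_{-1}$ = $n$-cycles; $\Pi_0$ = products of two disjoint cycles of lengths $n/2-1,n/2+1$ if $n/2$ is even, resp. $n/2-2,n/2+2$ if $n/2$ is odd; $\Pi_1$ = elements with exactly one fixed point and two further cycles of lengths $n/2-2,n/2+1$; for odd $3\le i\le n/3-1$, $\Pi_i$ = products of three disjoint cycles of lengths $i,(n-i-1)/2,(n-i+1)/2$; for even $2\le i\le n/3-1$ with $(n-i)/2$ odd, lengths $i,(n-i)/2,(n-i)/2$; for even $4\le i\le n/3-1$ with $(n-i)/2$ even, lengths $i,(n-i)/2-1,(n-i)/2+1$; if $(n-2)/2$ is even, $\Pi_2$ has lengths $2,n/2-4,n/2+2$. *)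

theory Defs
  imports "HOL-Algebra.Sym_Groups" "HOL-Combinatorics.Orbits" "HOL-Library.Multiset" "HOL-Library.Disjoint_Sets"
begin

text \<open>S_n is sym_group n, acting on {1..n}; A_n is carrier (alt_group n).\<close>

definition maximal_subgroup :: "('a, 'b) monoid_scheme \<Rightarrow> 'a set \<Rightarrow> bool" where
  "maximal_subgroup G M \<longleftrightarrow> subgroup M G \<and> M \<noteq> carrier G \<and>
     (\<forall>K. subgroup K G \<and> M \<subseteq> K \<longrightarrow> K = M \<or> K = carrier G)"

text \<open>Cycle type of a permutation of {1..n}: multiset of the lengths of its cycles
  (fixed points counted as cycles of length 1).\<close>
definition cycle_type :: "nat \<Rightarrow> (nat \<Rightarrow> nat) \<Rightarrow> nat multiset" where
  "cycle_type n p = image_mset card (mset_set ((\<lambda>x. orbit p x) ` {1..n}))"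

definition partition_stabilizer :: "nat \<Rightarrow> nat set set \<Rightarrow> (nat \<Rightarrow> nat) set" where
  "partition_stabilizer n P = {p \<in> carrier (sym_group n). \<forall>B\<in>P. p ` B \<in> P}"

definition set_stabilizer :: "nat \<Rightarrow> nat set \<Rightarrow> (nat \<Rightarrow> nat) set" where
  "set_stabilizer n A = {p \<in> carrier (sym_group n). p ` A = A}"

definition block_partition :: "nat \<Rightarrow> nat \<Rightarrow> nat \<Rightarrow> nat set set \<Rightarrow> bool" where
  "block_partition n k l P \<longleftrightarrow> partition_on {1..n} P \<and> card P = l \<and> (\<forall>B\<in>P. card B = k)"

definition imprimitive_stab :: "nat \<Rightarrow> (nat \<Rightarrow> nat) set \<Rightarrow> bool" where
  "imprimitive_stab n M \<longleftrightarrow> (\<exists>k l P. k * l = n \<and> 2 \<le> k \<and> 2 \<le> l \<and>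
      block_partition n k l P \<and> M = partition_stabilizer n P)"

definition calH :: "nat \<Rightarrow> (nat \<Rightarrow> nat) set set" where
  "calH n = {partition_stabilizer n P | P. block_partition n (n div 2) 2 P}
          \<union> {carrier (alt_group n)}
          \<union> {set_stabilizer n A | A. A \<subseteq> {1..n} \<and> 1 \<le> card A \<and> card A \<le> n div 3 - 1}"

definition Pi_types :: "nat \<Rightarrow> nat multiset set" where
  "Pi_types n =
     {{#n#}}
   \<union> {if even (n div 2) then {#n div 2 - 1, n div 2 + 1#} else {#n div 2 - 2, n div 2 + 2#}}
   \<union> {{#1, n div 2 - 2, n div 2 + 1#}}
   \<union> {{#i, (n - i - 1) div 2, (n - i + 1) div 2#} | i. odd i \<and> 3 \<le> i \<and> i \<le> n div 3 - 1}
   \<union> {{#i, (n - i) div 2, (n - i) div 2#} | i. even i \<and> 2 \<le> i \<and> i \<le> n div 3 - 1 \<and> odd ((n - i) div 2)}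
   \<union> {{#i, (n - i) div 2 - 1, (n - i) div 2 + 1#} | i. even i \<and> 4 \<le> i \<and> i \<le> n div 3 - 1 \<and> even ((n - i) div 2)}
   \<union> (if even ((n - 2) div 2) then {{#2, n div 2 - 4, n div 2 + 2#}} else {})"

definition calPi :: "nat \<Rightarrow> (nat \<Rightarrow> nat) set" where
  "calPi n = {p \<in> carrier (sym_group n). cycle_type n p \<in> Pi_types n}"

end

theory Submission
  imports Defs
begin

(* Each H in calH contains many elements of Pi. Pick c in H with cycle type in Pi and a large
   group G of permutations (all of S_n, or a setwise stabilizer) whose conjugates of c stay in H.
   A permutation q is determined by q c q^-1 together with its values at one point of each of the
   at most three cycles of c, so |H \<inter> Pi| * n^3 >= |G| >= ((n/2)!)^2. On the other hand the
   stabilizer of l >= 3 blocks of size k has order at most l! (k!)^l, and l! (k!)^l n^3 < ((n/2)!)^2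
   once kl = n >= 36. *)

section \<open>Cycles on consecutive intervals\<close>

definition interval_cycle :: "nat \<Rightarrow> nat \<Rightarrow> nat \<Rightarrow> nat" where
  "interval_cycle a b x = (if a \<le> x \<and> x < b then (if Suc x = b then a else Suc x) else x)"

lemma interval_cycle_in: "x \<in> {a..<b} \<Longrightarrow> interval_cycle a b x \<in> {a..<b}"
  by (auto simp: interval_cycle_def)

lemma interval_cycle_outside: "x < a \<or> b \<le> x \<Longrightarrow> interval_cycle a b x = x"
  by (auto simp: interval_cycle_def)

lemma interval_cycle_permutes: "interval_cycle a b permutes {a..<b}"
proof (rule inj_imp_permutes)
  show "inj_on (interval_cycle a b) {a..<b}"
    by (auto simp: inj_on_def interval_cycle_def split: if_splits)
qed (auto simp: interval_cycle_def)

lemma permutation_interval_cycle: "permutation (interval_cycle a b)"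
  using interval_cycle_permutes permutation_permutes by blast

lemma funpow_interval_cycle:
  "a \<le> x \<Longrightarrow> x < b \<Longrightarrow> (interval_cycle a b ^^ t) x = a + (x - a + t) mod (b - a)"
proof (induction t)
  case (Suc t)
  let ?r = "(x - a + t) mod (b - a)"
  have "?r < b - a" using Suc.prems by simp
  then have "a + ?r < b" by linarith
  have "(interval_cycle a b ^^ Suc t) x = interval_cycle a b (a + ?r)" using Suc by simp
  also have "\<dots> = a + (if Suc ?r = b - a then 0 else Suc ?r)"
    using \<open>a + ?r < b\<close> by (auto simp: interval_cycle_def)
  also have "\<dots> = a + (x - a + Suc t) mod (b - a)" by (simp add: mod_Suc)
  finally show ?case .
qed simp

lemma orbit_interval_cycle:
  assumes "x \<in> {a..<b}" shows "orbit (interval_cycle a b) x = {a..<b}"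
proof
  have "(interval_cycle a b ^^ t) x \<in> {a..<b}" for t
    by (induction t) (use assms interval_cycle_in in auto)
  then show "orbit (interval_cycle a b) x \<subseteq> {a..<b}" by (auto simp: orbit_altdef)
  show "{a..<b} \<subseteq> orbit (interval_cycle a b) x"
  proof
    fix y assume y: "y \<in> {a..<b}"
    define t where "t = (b - a) + (y - a) - (x - a)"
    have t: "x - a + t = (b - a) + (y - a)" "0 < t" using assms y by (auto simp: t_def)
    have "(interval_cycle a b ^^ t) x = a + (x - a + t) mod (b - a)"
      by (rule funpow_interval_cycle) (use assms in auto)
    also have "\<dots> = y"
      unfolding t(1) using y by (metis atLeastLessThan_iff diff_less_mono mod_add_self1 mod_less
          le_add_diff_inverse)
    finally have "(interval_cycle a b ^^ t) x = y" .
    with t(2) show "y \<in> orbit (interval_cycle a b) x" by (auto simp: orbit_altdef)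
  qed
qed

lemma evenperm_interval_cycle:
  "a < b \<Longrightarrow> evenperm (interval_cycle a b) \<longleftrightarrow> even (b - a - 1)"
proof (induction b)
  case (Suc b)
  show ?case
  proof (cases "a = b")
    case True
    then have "interval_cycle a (Suc b) = id" by (auto simp: interval_cycle_def fun_eq_iff)
    with True show ?thesis by simp
  next
    case False
    then have "a < b" using Suc by simp
    then have "interval_cycle a (Suc b) = transpose a b \<circ> interval_cycle a b"
      by (auto simp: interval_cycle_def fun_eq_iff transpose_def)
    then have "evenperm (interval_cycle a (Suc b)) \<longleftrightarrow>
        evenperm (transpose a b) = evenperm (interval_cycle a b)"
      by (simp add: evenperm_comp permutation_swap_id permutation_interval_cycle)
    also have "\<dots> \<longleftrightarrow> even (Suc b - a - 1)"
      using \<open>a < b\<close> Suc.IH by (simp add: evenperm_swap Suc_diff_le)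
    finally show ?thesis .
  qed
qed simp

fun interval_cycles :: "nat list \<Rightarrow> nat \<Rightarrow> nat" where
  "interval_cycles (a # b # cs) = interval_cycle a b \<circ> interval_cycles (b # cs)"
| "interval_cycles _ = id"

lemma sorted_wrt_hd_le_last: "sorted_wrt (<) (b # cs) \<Longrightarrow> b \<le> (last (b # cs) :: nat)"
  by (cases cs rule: rev_cases) auto

lemma interval_cycles_permutes:
  "sorted_wrt (<) cs \<Longrightarrow> interval_cycles cs permutes {hd cs..<last cs}"
proof (induction cs rule: interval_cycles.induct)
  case (1 a b cs)
  have "b \<le> last (b # cs)" using "1.prems" by (intro sorted_wrt_hd_le_last) simp
  then have "interval_cycle a b permutes {a..<last (a # b # cs)}"
    by (auto intro: permutes_subset[OF interval_cycle_permutes])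
  moreover have "interval_cycles (b # cs) permutes {a..<last (a # b # cs)}"
    using 1 by (auto intro: permutes_subset)
  ultimately have "interval_cycle a b \<circ> interval_cycles (b # cs) permutes {a..<last (a # b # cs)}"
    by (rule permutes_compose[rotated])
  then show ?case by (simp only: interval_cycles.simps(1) list.sel(1))
qed (auto intro: permutes_id)

lemma sorted_zip_tl_bounds:
  "sorted_wrt (<) (cs :: nat list) \<Longrightarrow> (a, b) \<in> set (zip cs (tl cs)) \<Longrightarrow>
    hd cs \<le> a \<and> a < b \<and> b \<le> last cs"
proof (induction cs rule: interval_cycles.induct)
  case (1 a' b' cs)
  then show ?case
    using sorted_wrt_hd_le_last[of b' cs] by (cases "(a, b) = (a', b')") auto
qed auto

lemma distinct_zip_tl_intervals:
  "sorted_wrt (<) (cs :: nat list) \<Longrightarrow> distinct (map (\<lambda>(a, b). {a..<b}) (zip cs (tl cs)))"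
proof (induction cs rule: interval_cycles.induct)
  case (1 a b cs)
  have "{a..<b} \<noteq> {a'..<b'}" if "(a', b') \<in> set (zip (b # cs) (tl (b # cs)))" for a' b'
  proof -
    have "b \<le> a'" using sorted_zip_tl_bounds[OF _ that] "1.prems" by simp
    then have "a \<notin> {a'..<b'}" using "1.prems" by simp
    with "1.prems" show ?thesis by auto
  qed
  with 1 show ?case by auto
qed auto

lemma interval_cycles_agrees:
  assumes "sorted_wrt (<) cs" "(a, b) \<in> set (zip cs (tl cs))" "x \<in> {a..<b}"
  shows "interval_cycles cs x = interval_cycle a b x"
  using assms
proof (induction cs rule: interval_cycles.induct)
  case (1 a' b' cs)
  have fix_below: "interval_cycles (b' # cs) y = y" if "y < b'" for y
    using interval_cycles_permutes[of "b' # cs"] "1.prems"(1) that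
    by (intro permutes_not_in) auto
  show ?case
  proof (cases "(a, b) = (a', b')")
    case True
    with "1.prems" fix_below show ?thesis by auto
  next
    case False
    then have ab: "(a, b) \<in> set (zip (b' # cs) (tl (b' # cs)))" using "1.prems"(2) by auto
    then have "a \<in> set (b' # cs)" by (auto dest: set_zip_leftD)
    then have "b' \<le> a" using "1.prems"(1) by auto
    moreover have "interval_cycle a b x \<in> {a..<b}" using "1.prems"(3) by (rule interval_cycle_in)
    ultimately show ?thesis
      using "1.IH" "1.prems" ab by (auto intro: interval_cycle_outside)
  qed
qed auto

lemma orbit_interval_cycles:
  assumes "sorted_wrt (<) cs" "(a, b) \<in> set (zip cs (tl cs))" "x \<in> {a..<b}"
  shows "orbit (interval_cycles cs) x = {a..<b}"
proof -
  have "orbit (interval_cycles cs) x = orbit (interval_cycle a b) x"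
    using assms interval_cycles_agrees[OF assms(1,2)] interval_cycle_in
    by (intro orbit_cong0[OF assms(3)]) auto
  with assms(3) show ?thesis by (simp add: orbit_interval_cycle)
qed

lemma image_interval_cycles:
  assumes "sorted_wrt (<) cs" "(a, b) \<in> set (zip cs (tl cs))"
  shows "interval_cycles cs ` {a..<b} = {a..<b}"
  using interval_cycles_agrees[OF assms] permutes_image[OF interval_cycle_permutes]
  by (metis image_cong)

lemma interval_cycles_cover:
  assumes "sorted_wrt (<) (cs :: nat list)" "cs \<noteq> []" "x \<in> {hd cs..<last cs}"
  shows "\<exists>(a, b) \<in> set (zip cs (tl cs)). x \<in> {a..<b}"
  using assms
proof (induction cs rule: interval_cycles.induct)
  case (1 a b cs)
  then show ?case by (cases "x < b") auto
qed auto

lemma cycle_type_interval_cycles: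
  assumes "sorted_wrt (<) cs" "cs \<noteq> []" "hd cs = 1" "last cs = Suc n"
  shows "cycle_type n (interval_cycles cs) = mset (map (\<lambda>(a, b). b - a) (zip cs (tl cs)))"
proof -
  let ?J = "\<lambda>(a, b). {a..<b::nat}" and ?z = "zip cs (tl cs)"
  have orbits: "(\<lambda>x. orbit (interval_cycles cs) x) ` {1..n} = ?J ` set ?z"
  proof (intro equalityI subsetI)
    fix I assume "I \<in> (\<lambda>x. orbit (interval_cycles cs) x) ` {1..n}"
    then obtain x where "x \<in> {1..n}" "I = orbit (interval_cycles cs) x" by blast
    with assms(3,4) have x: "x \<in> {hd cs..<last cs}" "I = orbit (interval_cycles cs) x" by auto
    then obtain a b where "(a, b) \<in> set ?z" "x \<in> {a..<b}"
      using interval_cycles_cover[OF assms(1,2)] by blast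
    with x orbit_interval_cycles[OF assms(1)] show "I \<in> ?J ` set ?z" by force
  next
    fix I assume "I \<in> ?J ` set ?z"
    then obtain a b where ab: "(a, b) \<in> set ?z" "I = {a..<b}" by auto
    with sorted_zip_tl_bounds[OF assms(1) ab(1)] orbit_interval_cycles[OF assms(1) ab(1), of a]
    show "I \<in> (\<lambda>x. orbit (interval_cycles cs) x) ` {1..n}"
      using assms(3,4) by (intro image_eqI[of _ _ a]) auto
  qed
  have "cycle_type n (interval_cycles cs) = image_mset card (mset (map ?J ?z))"
    unfolding cycle_type_def orbits
    by (metis distinct_zip_tl_intervals[OF assms(1)] mset_set_set set_map)
  also have "\<dots> = mset (map (\<lambda>(a, b). b - a) ?z)"
    by (simp add: multiset.map_comp comp_def split_def)
  finally show ?thesis .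
qed

section \<open>Conjugation and counting\<close>

lemma permutes_image_Diff: "p permutes S \<Longrightarrow> p ` (S - A) = S - p ` A"
  by (simp add: image_set_diff permutes_inj permutes_image)

lemma exists_permutes_image_eq:
  assumes "finite S" "A \<subseteq> S" "B \<subseteq> S" "card A = card B"
  shows "\<exists>\<sigma>. \<sigma> permutes S \<and> \<sigma> ` A = B"
proof -
  have fin: "finite A" "finite B" "finite (S - A)" "finite (S - B)"
    using assms(1-3) finite_subset by auto
  obtain h where h: "bij_betw h A B" using finite_same_card_bij[OF fin(1,2) assms(4)] by blast
  have "card (S - A) = card (S - B)" using assms fin by (simp add: card_Diff_subset)
  then obtain g where g: "bij_betw g (S - A) (S - B)"
    using finite_same_card_bij[OF fin(3,4)] by blast
  define \<sigma> where "\<sigma> x = (if x \<in> A then h x else if x \<in> S then g x else x)" for x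
  have b1: "bij_betw \<sigma> A B"
    using h by (rule bij_betw_cong[THEN iffD1, rotated]) (simp add: \<sigma>_def)
  have b2: "bij_betw \<sigma> (S - A) (S - B)"
    using g by (rule bij_betw_cong[THEN iffD1, rotated]) (simp add: \<sigma>_def)
  have "bij_betw \<sigma> (A \<union> (S - A)) (B \<union> (S - B))"
    by (rule bij_betw_combine[OF b1 b2]) blast
  then have "bij_betw \<sigma> S S" using assms(2,3) by (simp add: Un_absorb1 Un_Diff_cancel)
  moreover have "\<sigma> x = x" if "x \<notin> S" for x using that assms(2) by (auto simp: \<sigma>_def)
  ultimately have "\<sigma> permutes S" by (rule bij_imp_permutes)
  with b1 show ?thesis by (auto simp: bij_betw_def)
qed

definition conjugate :: "('a \<Rightarrow> 'a) \<Rightarrow> ('a \<Rightarrow> 'a) \<Rightarrow> 'a \<Rightarrow> 'a" where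
  "conjugate q p = q \<circ> p \<circ> inv' q"

lemma funpow_conjugate:
  assumes "q permutes S" shows "(conjugate q p ^^ t) (q x) = q ((p ^^ t) x)"
proof (induction t)
  case (Suc t) then show ?case
    by (simp add: conjugate_def permutes_inverses[OF assms])
qed simp

lemma orbit_conjugate:
  assumes "q permutes S" shows "orbit (conjugate q p) (q x) = q ` orbit p x"
  unfolding orbit_altdef funpow_conjugate[OF assms] by auto

lemma conjugate_permutes: "p permutes S \<Longrightarrow> q permutes S \<Longrightarrow> conjugate q p permutes S"
  unfolding conjugate_def by (intro permutes_compose permutes_inv) auto

lemma image_conjugate: "q permutes S \<Longrightarrow> conjugate q p ` (q ` A) = q ` (p ` A)"
  by (auto simp: conjugate_def image_comp permutes_inverses)

lemma evenperm_conjugate: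
  assumes "p permutes S" "q permutes S" "finite S"
  shows "evenperm (conjugate q p) = evenperm p"
proof -
  have "permutation p" "permutation q" "permutation (inv' q)"
    using assms permutation_permutes permutes_inv by blast+
  then show ?thesis
    by (simp add: conjugate_def evenperm_comp permutation_compose evenperm_inv) blast
qed

lemma cycle_type_conjugate:
  assumes q: "q permutes {1..n}" shows "cycle_type n (conjugate q p) = cycle_type n p"
proof -
  have inj: "inj_on (image q) X" for X
    using permutes_inj[OF q] by (simp add: inj_on_def inj_image_eq_iff)
  have "(\<lambda>y. orbit (conjugate q p) y) ` {1..n} = (\<lambda>y. orbit (conjugate q p) y) ` (q ` {1..n})"
    using permutes_image[OF q] by simp
  also have "\<dots> = image q ` ((\<lambda>x. orbit p x) ` {1..n})"
    by (auto simp: image_comp orbit_conjugate[OF q])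
  finally have orbits:
    "(\<lambda>y. orbit (conjugate q p) y) ` {1..n} = image q ` ((\<lambda>x. orbit p x) ` {1..n})" .
  have "cycle_type n (conjugate q p) =
      image_mset card (image_mset (image q) (mset_set ((\<lambda>x. orbit p x) ` {1..n})))"
    unfolding cycle_type_def orbits by (simp add: image_mset_mset_set[OF inj])
  also have "\<dots> = cycle_type n p"
    by (simp add: cycle_type_def multiset.map_comp comp_def
        card_image[OF inj_on_subset[OF permutes_inj[OF q]]])
  finally show ?thesis .
qed

text \<open>A permutation q is determined by its conjugate of c together with its values
  on one point from each orbit of c.\<close>
lemma card_conjugating_perms_le:
  assumes c: "c permutes S" and S: "finite S" and R: "R \<subseteq> S"
    and cover: "\<And>x. x \<in> S \<Longrightarrow> \<exists>r\<in>R. x \<in> orbit c r"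
    and G: "\<And>q. q \<in> G \<Longrightarrow> q permutes S" "\<And>q. q \<in> G \<Longrightarrow> conjugate q c \<in> T"
    and T: "finite T"
  shows "card G \<le> card T * card S ^ card R"
proof -
  have fR: "finite R" using R S by (rule finite_subset)
  define \<Phi> where "\<Phi> q = (conjugate q c, restrict q R)" for q
  have "inj_on \<Phi> G"
  proof (rule inj_onI)
    fix q q' assume q: "q \<in> G" and q': "q' \<in> G" and eq: "\<Phi> q = \<Phi> q'"
    then have conj: "conjugate q c = conjugate q' c" and on_R: "\<And>r. r \<in> R \<Longrightarrow> q r = q' r"
      by (auto simp: \<Phi>_def restrict_def fun_eq_iff split: if_splits)
    show "q = q'"
    proof
      fix x show "q x = q' x"
      proof (cases "x \<in> S")
        case False then show ?thesis using G(1)[OF q] G(1)[OF q'] by (simp add: permutes_not_in)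
      next
        case True
        then obtain r where r: "r \<in> R" "x \<in> orbit c r" using cover by blast
        then obtain t where "x = (c ^^ t) r" by (auto simp: orbit_altdef)
        then show ?thesis
          using funpow_conjugate[OF G(1)[OF q]] funpow_conjugate[OF G(1)[OF q']] conj on_R r(1)
          by metis
      qed
    qed
  qed
  moreover have "\<Phi> ` G \<subseteq> T \<times> (R \<rightarrow>\<^sub>E S)"
    using G R by (auto simp: \<Phi>_def permutes_in_image)
  ultimately have "card G \<le> card (T \<times> (R \<rightarrow>\<^sub>E S))"
    using T S fR by (intro card_inj_on_le) (auto intro: finite_PiE)
  also have "\<dots> = card T * card S ^ card R" using fR by (simp add: card_cartesian_product card_funcsetE)
  finally show ?thesis .
qed

section \<open>Orders of stabilizers\<close>

lemma card_setwise_stabilizer_ge: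
  assumes S: "finite S" and A: "A \<subseteq> S"
  shows "fact (card A) * fact (card S - card A) \<le> card {q. q permutes S \<and> q ` A = A}"
proof -
  let ?P = "{r. r permutes A} \<times> {r. r permutes S - A}"
  have fA: "finite A" using A S by (rule finite_subset)
  have "inj_on (\<lambda>(r1, r2). r1 \<circ> r2) ?P"
  proof (rule inj_onI, clarify)
    fix r1 r2 r1' r2' assume p: "r1 permutes A" "r2 permutes S - A" "r1' permutes A" "r2' permutes S - A"
      and eq: "r1 \<circ> r2 = r1' \<circ> r2'"
    have r1: "r1 = r1'"
    proof
      fix x show "r1 x = r1' x"
      proof (cases "x \<in> A")
        case True
        then have "r2 x = x" "r2' x = x" using p(2,4) by (auto intro: permutes_not_in)
        then show ?thesis using fun_cong[OF eq, of x] by simp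
      next
        case False then show ?thesis using p(1,3) by (simp add: permutes_not_in)
      qed
    qed
    moreover have "r2 = r2'"
    proof
      fix x have "r1 (r2 x) = r1 (r2' x)" using fun_cong[OF eq, of x] r1 by simp
      then show "r2 x = r2' x" by (rule injD[OF permutes_inj[OF p(1)]])
    qed
    ultimately show "r1 = r1' \<and> r2 = r2'" by simp
  qed
  moreover have "(\<lambda>(r1, r2). r1 \<circ> r2) ` ?P \<subseteq> {q. q permutes S \<and> q ` A = A}"
  proof clarify
    fix r1 r2 assume p: "r1 permutes A" "r2 permutes S - A"
    have "r2 ` A = A" using p(2) by (auto simp: image_iff permutes_not_in)
    then have "(r1 \<circ> r2) ` A = A" using permutes_image[OF p(1)] by (metis image_comp)
    moreover have "r1 \<circ> r2 permutes S"
      using p A by (intro permutes_compose) (auto intro: permutes_subset)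
    ultimately show "r1 \<circ> r2 permutes S \<and> (r1 \<circ> r2) ` A = A" by simp
  qed
  moreover have "finite {q. q permutes S \<and> q ` A = A}"
    using finite_permutations[OF S] by (rule rev_finite_subset) auto
  ultimately have "card ?P \<le> card {q. q permutes S \<and> q ` A = A}"
    by (rule card_inj_on_le)
  moreover have "card ?P = fact (card A) * fact (card S - card A)"
    using S fA A by (simp add: card_cartesian_product card_permutations card_Diff_subset)
  ultimately show ?thesis by simp
qed

lemma card_blockwise_stabilizer_le:
  assumes P: "partition_on S P" "finite S" "\<forall>B\<in>P. card B = k"
  shows "card {q. q permutes S \<and> (\<forall>B\<in>P. q ` B = B)} \<le> fact k ^ card P"
proof -
  let ?K = "{q. q permutes S \<and> (\<forall>B\<in>P. q ` B = B)}"
  have fP: "finite P" and fB: "\<And>B. B \<in> P \<Longrightarrow> finite B"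
    using P(1,2) by (auto simp: partition_on_def intro: finite_UnionD rev_finite_subset)
  define \<psi> where "\<psi> q = (\<lambda>B\<in>P. \<lambda>x. if x \<in> B then q x else x)" for q :: "'a \<Rightarrow> 'a"
  have "inj_on \<psi> ?K"
  proof (rule inj_onI)
    fix q q' assume q: "q \<in> ?K" and q': "q' \<in> ?K" and eq: "\<psi> q = \<psi> q'"
    show "q = q'"
    proof
      fix x show "q x = q' x"
      proof (cases "x \<in> S")
        case False
        have "q permutes S" "q' permutes S" using q q' by auto
        with False show ?thesis by (simp add: permutes_not_in)
      next
        case True
        then obtain B where "B \<in> P" "x \<in> B" using P(1) by (auto simp: partition_on_def)
        then have "\<psi> q B x = \<psi> q' B x" using eq by simp
        with \<open>B \<in> P\<close> \<open>x \<in> B\<close> show ?thesis by (simp add: \<psi>_def)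
      qed
    qed
  qed
  moreover have "\<psi> q \<in> (\<Pi>\<^sub>E B\<in>P. {g. g permutes B})" if q: "q \<in> ?K" for q
  proof -
    have "(\<lambda>x. if x \<in> B then q x else x) permutes B" if B: "B \<in> P" for B
    proof -
      have "q x \<in> B" if "x \<in> B" for x using q B that by blast
      then show ?thesis
        using permutes_inj[of q S] q fB[OF B]
        by (intro inj_imp_permutes) (auto simp: inj_on_def inj_def)
    qed
    then show ?thesis by (simp add: \<psi>_def)
  qed
  then have "\<psi> ` ?K \<subseteq> (\<Pi>\<^sub>E B\<in>P. {g. g permutes B})" by blast
  moreover have "finite (\<Pi>\<^sub>E B\<in>P. {g. g permutes B})"
    using fP fB by (intro finite_PiE) (auto intro: finite_permutations)
  ultimately have "card ?K \<le> card (\<Pi>\<^sub>E B\<in>P. {g. g permutes B})"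
    by (rule card_inj_on_le)
  also have "\<dots> = fact k ^ card P"
    using fP fB P(3) by (simp add: card_PiE card_permutations)
  finally show ?thesis .
qed

lemma card_partition_stabilizer_le:
  assumes P: "partition_on {1..n} P" "\<forall>B\<in>P. card B = k"
  shows "card (partition_stabilizer n P) \<le> fact (card P) * fact k ^ card P"
proof -
  let ?M = "partition_stabilizer n P"
  let ?K = "{q. q permutes {1..n} \<and> (\<forall>B\<in>P. q ` B = B)}"
  have fP: "finite P"
    using P(1) by (auto simp: partition_on_def intro: finite_UnionD)
  have M: "p permutes {1..n}" "\<And>B. B \<in> P \<Longrightarrow> p ` B \<in> P" if "p \<in> ?M" for p
    using that by (auto simp: partition_stabilizer_def sym_group_carrier)
  define \<sigma> where "\<sigma> p = (\<lambda>B. if B \<in> P then p ` B else B)" for p :: "nat \<Rightarrow> nat"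
  have \<sigma>: "\<sigma> p permutes P" if "p \<in> ?M" for p
    using permutes_inj[OF M(1)[OF that]] M(2)[OF that] fP
    by (intro inj_imp_permutes) (auto simp: inj_on_def \<sigma>_def inj_image_eq_iff)
  define \<rho> where "\<rho> s = (SOME p. p \<in> ?M \<and> \<sigma> p = s)" for s
  have \<rho>: "\<rho> (\<sigma> p) \<in> ?M" "\<sigma> (\<rho> (\<sigma> p)) = \<sigma> p" if "p \<in> ?M" for p
    using someI[of "\<lambda>p'. p' \<in> ?M \<and> \<sigma> p' = \<sigma> p" p] that by (simp_all add: \<rho>_def)
  define \<tau> where "\<tau> p = inv' (\<rho> (\<sigma> p)) \<circ> p" for p
  have decompose: "p = \<rho> (\<sigma> p) \<circ> \<tau> p" if "p \<in> ?M" for p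
    using M(1)[OF \<rho>(1)[OF that]] by (simp add: \<tau>_def o_assoc permutes_inv_o)
  have \<tau>: "\<tau> p \<in> ?K" if p: "p \<in> ?M" for p
  proof -
    let ?r = "\<rho> (\<sigma> p)"
    have r: "?r permutes {1..n}" using M(1)[OF \<rho>(1)[OF p]] .
    have "\<tau> p ` B = B" if B: "B \<in> P" for B
    proof -
      have "p ` B = ?r ` B" using fun_cong[OF \<rho>(2)[OF p], of B] B by (simp add: \<sigma>_def)
      then have "\<tau> p ` B = inv' ?r ` (?r ` B)" by (metis \<tau>_def image_comp)
      then show ?thesis by (simp add: image_inv_f_f permutes_inj[OF r])
    qed
    moreover have "\<tau> p permutes {1..n}"
      unfolding \<tau>_def using r M(1)[OF p] by (intro permutes_compose permutes_inv)
    ultimately show ?thesis by simp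
  qed
  have "inj_on (\<lambda>p. (\<sigma> p, \<tau> p)) ?M"
    by (rule inj_onI) (metis decompose prod.inject)
  moreover have "(\<lambda>p. (\<sigma> p, \<tau> p)) ` ?M \<subseteq> {s. s permutes P} \<times> ?K"
    using \<sigma> \<tau> by (simp add: image_subset_iff)
  moreover have "finite ?K"
    using finite_permutations[of "{1..n}"] by (rule rev_finite_subset) auto
  ultimately have "card ?M \<le> card ({s. s permutes P} \<times> ?K)"
    using finite_permutations[OF fP] by (intro card_inj_on_le) auto
  also have "\<dots> \<le> fact (card P) * fact k ^ card P"
    using card_blockwise_stabilizer_le[OF P(1) _ P(2)] fP
    by (simp add: card_cartesian_product card_permutations)
  finally show ?thesis .
qed

section \<open>Lower bounds for the members of calH\<close>

text \<open>Composing with \<sigma> moves the standard element interval_cycles cs into position;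
  q then ranges over a large group.\<close>
lemma card_le_card_Int_calPi:
  assumes n: "0 < n" and cs: "sorted_wrt (<) cs" "cs \<noteq> []" "hd cs = 1" "last cs = Suc n"
    and type: "mset (map (\<lambda>(a, b). b - a) (zip cs (tl cs))) \<in> Pi_types n"
    and \<sigma>: "\<sigma> permutes {1..n}" and G: "\<And>q. q \<in> G \<Longrightarrow> q permutes {1..n}"
    and H: "\<And>q. q \<in> G \<Longrightarrow> conjugate (q \<circ> \<sigma>) (interval_cycles cs) \<in> H"
  shows "card G \<le> card (H \<inter> calPi n) * n ^ (length cs - 1)"
proof -
  let ?c = "interval_cycles cs" and ?R = "fst ` set (zip cs (tl cs))"
  have U: "{1..n} = {hd cs..<last cs}" using cs(3,4) by auto
  have c: "?c permutes {1..n}" using interval_cycles_permutes[OF cs(1)] U by simp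
  have R: "?R \<subseteq> {1..n}" using sorted_zip_tl_bounds[OF cs(1)] U by fastforce
  have cover: "\<exists>r\<in>?R. x \<in> orbit ?c r" if "x \<in> {1..n}" for x
  proof -
    have "x \<in> {hd cs..<last cs}" using that cs(3,4) by simp
    then obtain a b where ab: "(a, b) \<in> set (zip cs (tl cs))" "x \<in> {a..<b}"
      using interval_cycles_cover[OF cs(1,2)] by blast
    then have "a \<in> ?R" "x \<in> orbit ?c a" by (force, simp add: orbit_interval_cycles[OF cs(1)])
    then show ?thesis by blast
  qed
  let ?G = "(\<lambda>q. q \<circ> \<sigma>) ` G"
  have "conjugate r ?c \<in> H \<inter> calPi n" if rG: "r \<in> ?G" for r
  proof -
    obtain q where q: "q \<in> G" "r = q \<circ> \<sigma>" using rG by blast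
    have r: "r permutes {1..n}" using permutes_compose[OF \<sigma> G[OF q(1)]] q(2) by simp
    have "cycle_type n (conjugate r ?c) \<in> Pi_types n"
      using type by (simp add: cycle_type_conjugate[OF r] cycle_type_interval_cycles[OF cs])
    with H[OF q(1)] q(2) conjugate_permutes[OF c r] show ?thesis
      by (simp add: calPi_def sym_group_carrier)
  qed
  moreover have "finite (H \<inter> calPi n)"
    using finite_permutations[of "{1..n}"]
    by (rule rev_finite_subset) (auto simp: calPi_def sym_group_carrier)
  ultimately have "card ?G \<le> card (H \<inter> calPi n) * card {1..n} ^ card ?R"
    using G \<sigma> by (intro card_conjugating_perms_le[OF c _ R cover]) (auto intro: permutes_compose)
  moreover have "card ?G = card G"
    by (intro card_image inj_onI) (metis comp_id o_assoc permutes_inv_o(1)[OF \<sigma>])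
  moreover have "card ?R \<le> length cs - 1"
    using card_image_le[of "set (zip cs (tl cs))" fst] card_length[of "zip cs (tl cs)"] by simp
  ultimately show ?thesis
    using n by (auto elim!: order_trans intro!: mult_le_mono2 power_increasing)
qed

lemma three_cycle_type_in_Pi_types:
  assumes n: "36 \<le> n" "even n" and i: "1 \<le> i" "i \<le> n div 3 - 1"
  shows "\<exists>a. 1 \<le> a \<and> i + a < n \<and> {#i, a, n - i - a#} \<in> Pi_types n"
proof -
  obtain m where m: "n = 2 * m" using n(2) by blast
  have "3 * (n div 3) \<le> n" by simp
  then have im: "i + 5 < m" using i n m by linarith
  have pick: "\<exists>a. 1 \<le> a \<and> i + a < n \<and> {#i, a, n - i - a#} \<in> Pi_types n"
    if "{#i, a, b#} \<in> Pi_types n" "i + a + b = n" "1 \<le> a" "1 \<le> b" for a b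
  proof -
    have "n - i - a = b" using that(2) by linarith
    with that show ?thesis by (intro exI[of _ a]) simp
  qed
  consider "i = 1" | j where "i = 2 * j + 1" "1 \<le> j" | j where "i = 2 * j" "odd (m - j)"
    | j where "i = 2 * j" "2 \<le> j" "even (m - j)" | "i = 2" "even (m - 1)"
  proof (cases "odd i")
    case True
    then obtain j where "i = 2 * j + 1" by (rule oddE)
    with that(1,2) show ?thesis by (cases "j = 0") auto
  next
    case False
    then have "even i" by simp
    then obtain j where j: "i = 2 * j" by (rule evenE)
    with i(1) have "1 \<le> j" by simp
    with that(3-5) j show ?thesis by (cases "odd (m - j)"; cases "j = 1") auto
  qed
  then show ?thesis
  proof cases
    case 1
    then have "{#i, m - 2, m + 1#} \<in> Pi_types n" using m by (simp add: Pi_types_def)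
    then show ?thesis using 1 m im by (intro pick[of "m - 2" "m + 1"]) auto
  next
    case (2 j)
    have "(n - i - 1) div 2 = m - j - 1" "(n - i + 1) div 2 = m - j"
      using 2 m im by (simp_all add: Suc_diff_Suc[symmetric] flip: diff_mult_distrib2)
    moreover have "{#i, (n - i - 1) div 2, (n - i + 1) div 2#} \<in> Pi_types n"
    proof -
      have "odd i" "3 \<le> i" using 2 by auto
      with i show ?thesis unfolding Pi_types_def by blast
    qed
    ultimately show ?thesis using 2 m im by (intro pick[of "m - j - 1" "m - j"]) auto
  next
    case (3 j)
    have "(n - i) div 2 = m - j" using 3 m by (simp flip: diff_mult_distrib2)
    moreover have "{#i, (n - i) div 2, (n - i) div 2#} \<in> Pi_types n"
    proof -
      have "even i" "2 \<le> i" "odd ((n - i) div 2)" using 3 i(1) \<open>(n - i) div 2 = m - j\<close> by auto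
      with i show ?thesis unfolding Pi_types_def by blast
    qed
    ultimately show ?thesis using 3 m im by (intro pick[of "m - j" "m - j"]) auto
  next
    case (4 j)
    have "(n - i) div 2 = m - j" using 4 m by (simp flip: diff_mult_distrib2)
    moreover have "{#i, (n - i) div 2 - 1, (n - i) div 2 + 1#} \<in> Pi_types n"
    proof -
      have "even i" "4 \<le> i" "even ((n - i) div 2)" using 4 \<open>(n - i) div 2 = m - j\<close> by auto
      with i show ?thesis unfolding Pi_types_def by blast
    qed
    ultimately show ?thesis using 4 m im by (intro pick[of "m - j - 1" "m - j + 1"]) auto
  next
    case 5
    have "(n - 2) div 2 = m - 1" using m by simp
    with 5 have "{#2, n div 2 - 4, n div 2 + 2#} \<in> Pi_types n"
      unfolding Pi_types_def by (intro UnI2) simp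
    then have "{#i, m - 4, m + 2#} \<in> Pi_types n" using 5 m by simp
    then show ?thesis using 5 m im by (intro pick[of "m - 4" "m + 2"]) auto
  qed
qed

lemma card_alt_group_Int_calPi_ge:
  assumes n: "4 \<le> n" "even n"
  shows "fact n \<le> card (carrier (alt_group n) \<inter> calPi n) * n ^ 2"
proof -
  obtain m where m: "n = 2 * m" using n(2) by blast
  define a where "a = (if even m then m - 1 else m - 2)"
  have a: "1 \<le> a \<and> a < n \<and> odd a \<and> odd (n - a)"
  proof (cases "even m")
    case True
    with n m show ?thesis by (auto simp: a_def)
  next
    case False
    with n m have "3 \<le> m" by (cases "m = 2") auto
    with False m show ?thesis by (auto simp: a_def)
  qed
  let ?cs = "[1, Suc a, Suc n]"
  let ?c = "interval_cycles ?cs"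
  have type: "mset (map (\<lambda>(a, b). b - a) (zip ?cs (tl ?cs))) \<in> Pi_types n"
  proof -
    have "mset (map (\<lambda>(a, b). b - a) (zip ?cs (tl ?cs))) =
        (if even (n div 2) then {#n div 2 - 1, n div 2 + 1#} else {#n div 2 - 2, n div 2 + 2#})"
      using m a by (auto simp: a_def)
    then show ?thesis by (simp add: Pi_types_def)
  qed
  have "evenperm ?c"
  proof -
    have "evenperm (interval_cycle 1 (Suc a))" "evenperm (interval_cycle (Suc a) (Suc n))"
      using a by (simp_all add: evenperm_interval_cycle)
    then show ?thesis
      by (simp add: evenperm_comp permutation_interval_cycle)
  qed
  moreover have "?c permutes {1..n}"
    using interval_cycles_permutes[of ?cs] a by (simp add: atLeastLessThanSuc_atLeastAtMost)
  ultimately have "conjugate (q \<circ> id) ?c \<in> carrier (alt_group n)" if "q permutes {1..n}" for q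
    using that by (simp add: alt_group_carrier conjugate_permutes evenperm_conjugate)
  then have "card {q. q permutes {1..n}} \<le>
      card (carrier (alt_group n) \<inter> calPi n) * n ^ (length ?cs - 1)"
    using n a type by (intro card_le_card_Int_calPi[where \<sigma> = id]) (auto intro: permutes_id)
  then show ?thesis by (simp add: card_permutations power2_eq_square)
qed

lemma card_set_stabilizer_Int_calPi_ge:
  assumes n: "36 \<le> n" "even n" and A: "A \<subseteq> {1..n}" "1 \<le> card A" "card A \<le> n div 3 - 1"
  shows "fact (card A) * fact (n - card A) \<le> card (set_stabilizer n A \<inter> calPi n) * n ^ 3"
proof -
  let ?i = "card A"
  obtain a where a: "1 \<le> a" "?i + a < n" "{#?i, a, n - ?i - a#} \<in> Pi_types n"
    using three_cycle_type_in_Pi_types[OF n A(2,3)] by blast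
  let ?cs = "[1, Suc ?i, Suc (?i + a), Suc n]"
  let ?c = "interval_cycles ?cs"
  have cs: "sorted_wrt (<) ?cs" using a A(2) by auto
  have c: "?c ` {1..<Suc ?i} = {1..<Suc ?i}" by (rule image_interval_cycles[OF cs]) simp
  have "{1..<Suc ?i} \<subseteq> {1..n}" using a by auto
  then obtain \<sigma> where \<sigma>: "\<sigma> permutes {1..n}" "\<sigma> ` {1..<Suc ?i} = A"
    using exists_permutes_image_eq[of "{1..n}" "{1..<Suc ?i}" A] A(1) by auto
  let ?G = "{q. q permutes {1..n} \<and> q ` A = A}"
  have "conjugate (q \<circ> \<sigma>) ?c \<in> set_stabilizer n A" if q: "q \<in> ?G" for q
  proof -
    have r: "q \<circ> \<sigma> permutes {1..n}" using q \<sigma>(1) by (auto intro: permutes_compose)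
    have rA: "(q \<circ> \<sigma>) ` {1..<Suc ?i} = A"
      using q \<sigma>(2) by (metis (mono_tags) image_comp mem_Collect_eq)
    have "conjugate (q \<circ> \<sigma>) ?c ` A = A"
      using image_conjugate[OF r, of ?c "{1..<Suc ?i}"] c rA by simp
    moreover have "?c permutes {1..n}"
      using interval_cycles_permutes[OF cs] by (simp add: atLeastLessThanSuc_atLeastAtMost)
    ultimately show ?thesis
      using r by (simp add: set_stabilizer_def sym_group_carrier conjugate_permutes)
  qed
  then have "card ?G \<le> card (set_stabilizer n A \<inter> calPi n) * n ^ (length ?cs - 1)"
    using n a \<sigma>(1) cs by (intro card_le_card_Int_calPi) (auto simp: diff_diff_add)
  moreover have "fact ?i * fact (n - ?i) \<le> card ?G"
    using card_setwise_stabilizer_ge[of "{1..n}" A] A(1) by simp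
  ultimately show ?thesis by (simp add: power3_eq_cube mult.assoc)
qed

lemma long_cycle_swaps_halves:
  "\<exists>B. B \<subseteq> {1..2 * m} \<and> card B = m \<and>
    interval_cycles [1, Suc (2 * m)] ` B = {1..2 * m} - B"
proof -
  let ?c = "interval_cycles [1, Suc (2 * m)]"
  define B where "B = (\<lambda>j. 2 * j + 1) ` {..<m}"
  have B: "B \<subseteq> {1..2 * m}" "card B = m" "finite B"
    by (auto simp: B_def card_image inj_on_def)
  have "?c ` B \<subseteq> {1..2 * m} - B"
  proof
    fix y assume "y \<in> ?c ` B"
    then obtain j where "j < m" "y = ?c (2 * j + 1)" by (auto simp: B_def)
    then have "y = 2 * j + 2" "j < m" by (simp_all add: interval_cycle_def)
    then show "y \<in> {1..2 * m} - B" by (auto simp: B_def) presburger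
  qed
  moreover have "card (?c ` B) = card ({1..2 * m} - B)"
    using B interval_cycle_permutes[of 1 "Suc (2 * m)"]
    by (simp add: card_image permutes_inj_on card_Diff_subset atLeastLessThanSuc_atLeastAtMost)
  ultimately have "?c ` B = {1..2 * m} - B" by (intro card_subset_eq) auto
  with B show ?thesis by blast
qed

lemma card_half_partition_stabilizer_Int_calPi_ge:
  assumes n: "1 \<le> n" "even n" and P: "block_partition n (n div 2) 2 P"
  shows "fact (n div 2) * fact (n div 2) \<le> card (partition_stabilizer n P \<inter> calPi n) * n"
proof -
  obtain m where m: "n = 2 * m" using n(2) by blast
  obtain B1 B2 where P12: "P = {B1, B2}" "B1 \<noteq> B2"
    using P by (auto simp: block_partition_def card_2_iff)
  have B2: "B2 = {1..n} - B1" and B1: "B1 \<subseteq> {1..n}" "card B1 = m"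
    using P P12 m by (auto simp: block_partition_def partition_on_def disjoint_def)
  let ?cs = "[1, Suc n]"
  let ?c = "interval_cycles ?cs"
  have c: "?c permutes {1..n}"
    using interval_cycles_permutes[of ?cs] n(1) by (simp add: atLeastLessThanSuc_atLeastAtMost)
  obtain B where B: "B \<subseteq> {1..n}" "card B = m" "?c ` B = {1..n} - B"
    using long_cycle_swaps_halves[of m] m by blast
  have cB': "?c ` ({1..n} - B) = B" using B(1,3) permutes_image_Diff[OF c] by auto
  obtain \<sigma> where \<sigma>: "\<sigma> permutes {1..n}" "\<sigma> ` B = B1"
    using exists_permutes_image_eq[of "{1..n}" B B1] B B1 by auto
  let ?G = "{q. q permutes {1..n} \<and> q ` B1 = B1}"
  have "conjugate (q \<circ> \<sigma>) ?c \<in> partition_stabilizer n P" if q: "q \<in> ?G" for q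
  proof -
    let ?r = "q \<circ> \<sigma>"
    have r: "?r permutes {1..n}" using q \<sigma>(1) by (auto intro: permutes_compose)
    have rB: "?r ` B = B1"
      using q \<sigma>(2) by (metis (mono_tags) image_comp mem_Collect_eq)
    then have rB': "?r ` ({1..n} - B) = B2"
      using B2 permutes_image_Diff[OF r] by simp
    have "conjugate ?r ?c ` B1 = B2" "conjugate ?r ?c ` B2 = B1"
      using image_conjugate[OF r, of ?c B] image_conjugate[OF r, of ?c "{1..n} - B"]
        rB rB' B(3) cB' by simp_all
    then show ?thesis using r c P12(1)
      by (simp add: partition_stabilizer_def sym_group_carrier conjugate_permutes)
  qed
  then have "card ?G \<le> card (partition_stabilizer n P \<inter> calPi n) * n ^ (length ?cs - 1)"
    using n \<sigma>(1) by (intro card_le_card_Int_calPi) (auto simp: Pi_types_def)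
  moreover have "fact m * fact m \<le> card ?G"
    using card_setwise_stabilizer_ge[of "{1..n}" B1] B1 m by simp
  ultimately show ?thesis using m by simp
qed

section \<open>Factorial inequalities\<close>

lemma fact_mult_Suc_power_le: "fact n * (n + 1) ^ j \<le> (fact (n + j) :: nat)"
proof (induction j)
  case (Suc j)
  have "fact n * (n + 1) ^ Suc j = fact n * (n + 1) ^ j * (n + 1)" by (simp add: algebra_simps)
  also have "\<dots> \<le> fact (n + j) * (n + j + 1)" by (rule mult_le_mono[OF Suc.IH]) simp
  also have "\<dots> = fact (n + Suc j)" by (simp add: algebra_simps)
  finally show ?case .
qed simp

lemma fact_square_le_fact_mult_fact:
  assumes "i \<le> m" shows "fact m * fact m \<le> fact i * (fact (2 * m - i) :: nat)"
  using assms
proof (induction i rule: inc_induct)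
  case (step i)
  define j where "j = 2 * m - Suc i"
  have j: "2 * m - i = Suc j" "Suc i \<le> Suc j" using step.hyps by (auto simp: j_def)
  have "fact m * fact m \<le> fact (Suc i) * (fact j :: nat)" using step.IH by (simp add: j_def)
  also have "\<dots> = Suc i * (fact i * fact j)" by (simp add: algebra_simps)
  also have "\<dots> \<le> Suc j * (fact i * fact j)" using j(2) by (rule mult_le_mono1)
  also have "\<dots> = fact i * fact (2 * m - i)" unfolding j(1) by (simp add: algebra_simps)
  finally show ?case .
qed (simp add: mult_2)

lemma fact_double_le: "fact (2 * m) \<le> 2 ^ (2 * m) * (fact m * (fact m :: nat))"
proof -
  have "fact (2 * m) = fact m * fact m * (2 * m choose m)"
    using binomial_fact_lemma[of m "2 * m"] by (simp add: mult_2 algebra_simps)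
  also have "\<dots> \<le> fact m * fact m * 2 ^ (2 * m)" by (intro mult_le_mono binomial_le_pow2) auto
  finally show ?thesis by (simp only: mult.commute)
qed

lemma blocks_step_ineq:
  fixes k l :: nat assumes k: "2 \<le> k" and l: "4 \<le> l"
  shows "(k + 1) ^ l * 2 ^ l * (k + 1) ^ 3 \<le> k ^ 3 * (k * l + 1) ^ l"
proof -
  have pow: "81 * 2 ^ l \<le> 16 * (3::nat) ^ l"
    using l by (induction l rule: dec_induct) simp_all
  have cube: "8 * (k + 1) ^ 3 \<le> 27 * k ^ 3"
  proof -
    have "(2 * (k + 1)) ^ 3 \<le> (3 * k) ^ 3" using k by (intro power_mono) auto
    then show ?thesis unfolding power_mult_distrib by simp
  qed
  have "81 * (2 ^ l * (k + 1) ^ 3) \<le> (16 * 3 ^ l) * (k + 1) ^ 3"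
    using pow by (simp add: mult.assoc[symmetric])
  also have "\<dots> = 3 ^ l * (2 * (8 * (k + 1) ^ 3))" by simp
  also have "\<dots> \<le> 3 ^ l * (2 * (27 * k ^ 3))" using cube by simp
  also have "\<dots> \<le> 81 * (3 ^ l * k ^ 3)" by simp
  finally have base: "2 ^ l * (k + 1) ^ 3 \<le> 3 ^ l * k ^ 3" by simp
  have "3 * (k + 1) \<le> k * l + 1" using k l by (simp add: order_trans[of _ "k * 4"])
  then have grow: "(3 * (k + 1)) ^ l \<le> (k * l + 1) ^ l" by (rule power_mono) simp
  have "(k + 1) ^ l * 2 ^ l * (k + 1) ^ 3 = (k + 1) ^ l * (2 ^ l * (k + 1) ^ 3)" by simp
  also have "\<dots> \<le> (k + 1) ^ l * (3 ^ l * k ^ 3)" using base by simp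
  also have "\<dots> = k ^ 3 * (3 * (k + 1)) ^ l" unfolding power_mult_distrib by (simp only: mult_ac)
  also have "\<dots> \<le> k ^ 3 * (k * l + 1) ^ l" using grow by simp
  finally show ?thesis .
qed

lemma fact_blocks_bound_Suc:
  assumes k: "2 \<le> k" and l: "4 \<le> l"
    and IH: "fact k ^ l * fact l * (k * l) ^ 3 * 2 ^ (k * l) < (fact (k * l) :: nat)"
  shows "fact (k + 1) ^ l * fact l * ((k + 1) * l) ^ 3 * 2 ^ ((k + 1) * l) < (fact ((k + 1) * l) :: nat)"
proof -
  define L where "L = fact k ^ l * fact l * (k * l) ^ 3 * (2::nat) ^ (k * l)"
  define X where "X = (k + 1) ^ l * 2 ^ l * (k + 1) ^ 3"
  have f1: "fact (k + 1) ^ l = (k + 1) ^ l * (fact k ^ l :: nat)"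
    by (simp only: fact_Suc Suc_eq_plus1[symmetric] of_nat_id power_mult_distrib)
  have f2: "((k + 1) * l) ^ 3 = (k + 1) ^ 3 * l ^ 3" "(k * l) ^ 3 = k ^ 3 * l ^ 3"
    by (simp_all only: power_mult_distrib)
  have f3: "(2::nat) ^ ((k + 1) * l) = 2 ^ (k * l) * 2 ^ l"
    by (simp only: add_mult_distrib power_add mult_1)
  have "k ^ 3 * (fact (k + 1) ^ l * fact l * ((k + 1) * l) ^ 3 * 2 ^ ((k + 1) * l)) = L * X"
    unfolding L_def X_def f1 f2 f3 by (simp only: mult_ac)
  also have "\<dots> < fact (k * l) * X" using IH by (simp add: L_def X_def)
  also have "\<dots> \<le> k ^ 3 * (fact (k * l) * (k * l + 1) ^ l)"
    using blocks_step_ineq[OF k l] by (simp add: X_def)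
  also have "\<dots> \<le> k ^ 3 * fact ((k + 1) * l)"
    using fact_mult_Suc_power_le[of "k * l" l] by (simp add: add_mult_distrib add.commute)
  finally show ?thesis by simp
qed

lemma fact_blocks_bound_two:
  assumes "18 \<le> l" shows "fact 2 ^ l * fact l * (2 * l) ^ 3 * 2 ^ (2 * l) < (fact (2 * l) :: nat)"
  using assms
proof (induction l rule: dec_induct)
  case (step l)
  define L where "L = fact 2 ^ l * fact l * (2 * l) ^ 3 * (2::nat) ^ (2 * l)"
  define Y where "Y = 8 * (l + 1) * (l + 1) ^ 3"
  have "(4 * (l + 1)) ^ 3 \<le> (5 * l) ^ 3" using step.hyps by (intro power_mono) auto
  then have cube: "(l + 1) ^ 3 \<le> 2 * l ^ 3" unfolding power_mult_distrib by simp
  have square: "16 * (l + 1) \<le> (2 * l + 1) ^ 2"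
    using step.hyps mult_le_mono[of 16 "2 * l + 1" "l + 1" "2 * l + 1"]
    by (simp add: power2_eq_square)
  have "Y \<le> 8 * (l + 1) * (2 * l ^ 3)" using cube by (simp add: Y_def)
  also have "\<dots> = l ^ 3 * (16 * (l + 1))" by simp
  also have "\<dots> \<le> l ^ 3 * (2 * l + 1) ^ 2" using square by simp
  finally have Y: "Y \<le> l ^ 3 * (2 * l + 1) ^ 2" .
  have f: "fact 2 ^ (l + 1) = 2 * (fact 2 ^ l :: nat)" "fact (l + 1) = (l + 1) * (fact l :: nat)"
    "(2::nat) ^ (2 * (l + 1)) = 2 ^ (2 * l) * 4"
    by (simp_all add: power_add)
  have g: "(2 * (l + 1)) ^ 3 = 8 * (l + 1) ^ 3" "(2 * l) ^ 3 = 8 * l ^ 3"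
    by (simp_all only: power_mult_distrib) simp_all
  have "l ^ 3 * (fact 2 ^ (l + 1) * fact (l + 1) * (2 * (l + 1)) ^ 3 * 2 ^ (2 * (l + 1))) = L * Y"
    unfolding L_def Y_def f g by (simp only: mult_ac)
  also have "\<dots> < fact (2 * l) * Y" using step.IH by (simp add: L_def Y_def)
  also have "\<dots> \<le> l ^ 3 * (fact (2 * l) * (2 * l + 1) ^ 2)" using Y by simp
  also have "\<dots> \<le> l ^ 3 * fact (2 * (l + 1))" using fact_mult_Suc_power_le[of "2 * l" 2] by simp
  finally show ?case by simp
qed (simp add: fact_numeral)

lemma fact_blocks_bound:
  assumes k: "2 \<le> k" and l: "4 \<le> l" and kl: "36 \<le> k * l"
  shows "fact k ^ l * fact l * (k * l) ^ 3 * 2 ^ (k * l) < (fact (k * l) :: nat)"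
proof -
  have from_base: "fact k ^ l * fact l * (k * l) ^ 3 * 2 ^ (k * l) < (fact (k * l) :: nat)"
    if "2 \<le> k0" "k0 \<le> k"
      and "fact k0 ^ l * fact l * (k0 * l) ^ 3 * 2 ^ (k0 * l) < (fact (k0 * l) :: nat)" for k0
    using that(2,1,3)
  proof (induction k rule: dec_induct)
    case (step k) then show ?case using fact_blocks_bound_Suc[OF _ l] by simp
  qed
  show ?thesis
  proof (cases "18 \<le> l")
    case True
    then show ?thesis using from_base[of 2] fact_blocks_bound_two k by simp
  next
    case False
    then have small: "l = 4 \<or> l = 5 \<or> l = 6 \<or> l = 7 \<or> l = 8 \<or> l = 9 \<or> l = 10 \<or> l = 11
        \<or> l = 12 \<or> l = 13 \<or> l = 14 \<or> l = 15 \<or> l = 16 \<or> l = 17"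
      using l by presburger
    define k0 where "k0 = (l + 35) div l" \<comment> \<open>the least k with 36 \<le> k * l\<close>
    have "2 \<le> k0" using small unfolding k0_def by (elim disjE) simp_all
    moreover have "k0 \<le> k"
      unfolding k0_def using kl by (intro less_Suc_eq_le[THEN iffD1] less_mult_imp_div_less) simp
    moreover have "fact k0 ^ l * fact l * (k0 * l) ^ 3 * 2 ^ (k0 * l) < (fact (k0 * l) :: nat)"
      using small unfolding k0_def by (elim disjE; simp add: fact_numeral)
    ultimately show ?thesis by (rule from_base)
  qed
qed

lemma fact_three_blocks_bound:
  assumes "6 \<le> t" shows "6 * fact (2 * t) ^ 3 * (6 * t) ^ 3 < (fact (3 * t) ^ 2 :: nat)"
  using assms
proof (induction t rule: dec_induct)
  case (step t)
  define L :: nat where "L = 6 * fact (2 * t) ^ 3 * (6 * t) ^ 3"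
  define F :: nat where "F = fact (3 * t) ^ 2"
  have "fact (2 * t + 2) = (2 * t + 2) * ((2 * t + 1) * (fact (2 * t) :: nat))"
    by (simp add: algebra_simps)
  also have "\<dots> \<le> (2 * t + 2) * ((2 * t + 2) * fact (2 * t))" by (intro mult_le_mono) auto
  finally have "fact (2 * t + 2) \<le> (2 * t + 2) ^ 2 * (fact (2 * t) :: nat)"
    by (simp only: power2_eq_square mult.assoc)
  then have fact2: "fact (2 * t + 2) ^ 3 \<le> ((2 * t + 2) ^ 2 * fact (2 * t)) ^ 3"
    by (rule power_mono) simp
  have "(6 * (t + 1)) ^ 9 \<le> (7 * t) ^ 9" using step.hyps by (intro power_mono) auto
  then have ratio: "64 * (t + 1) ^ 9 \<le> 729 * t ^ 9" unfolding power_mult_distrib by simp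
  have "(3 * t) ^ 6 \<le> (3 * t + 1) ^ 6" by (intro power_mono) auto
  then have "729 * t ^ 6 \<le> (3 * t + 1) ^ 6" unfolding power_mult_distrib by simp
  then have "729 * t ^ 9 \<le> t ^ 3 * (3 * t + 1) ^ 6"
    using mult_le_mono2[of "729 * t ^ 6" "(3 * t + 1) ^ 6" "t ^ 3"]
    by (simp add: power_add[symmetric] algebra_simps)
  note grow = order_trans[OF ratio this]
  have "t ^ 3 * (6 * fact (2 * (t + 1)) ^ 3 * (6 * (t + 1)) ^ 3)
        \<le> 6 * ((2 * t + 2) ^ 2 * fact (2 * t)) ^ 3 * (t ^ 3 * (6 * (t + 1)) ^ 3)"
    using fact2 by (simp add: algebra_simps mult_le_mono)
  also have "\<dots> = L * (64 * (t + 1) ^ 9)"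
  proof -
    have "2 * t + 2 = 2 * (t + 1)" by simp
    then have e1: "((2 * t + 2) ^ 2 * fact (2 * t)) ^ 3 = 64 * (t + 1) ^ 6 * (fact (2 * t) :: nat) ^ 3"
      by (simp only: power_mult_distrib power_mult[symmetric]) simp
    have e2: "(6 * (t + 1)) ^ 3 = 216 * (t + 1) ^ 3" "(6 * t) ^ 3 = 216 * t ^ 3"
      by (simp_all only: power_mult_distrib) simp_all
    have e3: "(t + 1) ^ 9 = (t + 1) ^ 6 * (t + 1) ^ 3" by (simp add: power_add[symmetric])
    show ?thesis unfolding e1 e2 e3 L_def by (simp only: mult_ac)
  qed
  also have "\<dots> < F * (64 * (t + 1) ^ 9)" using step.IH by (simp add: L_def F_def mult_ac)
  also have "\<dots> \<le> F * (t ^ 3 * (3 * t + 1) ^ 6)" using grow by simp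
  also have "\<dots> = t ^ 3 * (fact (3 * t) * (3 * t + 1) ^ 3) ^ 2"
    unfolding F_def by (simp add: power_mult_distrib power_mult[symmetric] algebra_simps)
  also have "\<dots> \<le> t ^ 3 * fact (3 * t + 3) ^ 2"
    using fact_mult_Suc_power_le[of "3 * t" 3] by (intro mult_le_mono power_mono) auto
  finally show ?case by (simp add: algebra_simps)
qed (simp add: fact_numeral)

text \<open>For l \<ge> 4 the crude estimate n! \<le> 2^n ((n/2)!)^2 suffices; for l = 3 it does not.\<close>
lemma fact_blocks_lt_fact_half_square:
  assumes n: "36 \<le> n" "n mod 6 = 0" and kl: "k * l = n" "2 \<le> k" "3 \<le> l"
  shows "fact l * fact k ^ l * n ^ 3 < fact (n div 2) * (fact (n div 2) :: nat)"
proof (cases "l = 3")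
  case True
  then have "even k" using n kl by presburger
  then obtain t where t: "k = 2 * t" by blast
  then have "6 \<le> t" "n = 6 * t" "n div 2 = 3 * t" using n kl True by auto
  with fact_three_blocks_bound[of t] True t show ?thesis
    by (simp add: power2_eq_square fact_numeral mult_ac)
next
  case False
  have "even n" using n(2) by presburger
  then obtain m where m: "n = 2 * m" by blast
  have "2 ^ n * (fact l * fact k ^ l * n ^ 3) < fact n"
    using fact_blocks_bound[of k l] False kl n by (simp add: mult_ac)
  also have "\<dots> \<le> 2 ^ n * (fact m * fact m)" using fact_double_le[of m] m by simp
  finally show ?thesis using m by simp
qed

lemma card_calH_Int_calPi_ge:
  assumes n: "36 \<le> n" "even n" and H: "H \<in> calH n"
  shows "fact (n div 2) * fact (n div 2) \<le> card (H \<inter> calPi n) * n ^ 3"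
proof -
  obtain m where m: "n = 2 * m" using n(2) by blast
  have n_pow: "card (H \<inter> calPi n) * n ^ e \<le> card (H \<inter> calPi n) * n ^ 3" if "e \<le> 3" for e
    using that n by (intro mult_le_mono2 power_increasing) auto
  from H consider P where "H = partition_stabilizer n P" "block_partition n (n div 2) 2 P"
    | "H = carrier (alt_group n)"
    | A where "H = set_stabilizer n A" "A \<subseteq> {1..n}" "1 \<le> card A" "card A \<le> n div 3 - 1"
    unfolding calH_def by blast
  then show ?thesis
  proof cases
    case 1
    then have "fact (n div 2) * fact (n div 2) \<le> card (H \<inter> calPi n) * n ^ 1"
      using card_half_partition_stabilizer_Int_calPi_ge[of n P] n by simp
    also have "\<dots> \<le> card (H \<inter> calPi n) * n ^ 3" by (rule n_pow) simp
    finally show ?thesis .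
  next
    case 2
    have "fact (n div 2) * fact (n div 2) \<le> (fact n :: nat)"
      using fact_square_le_fact_mult_fact[of 0 m] m by simp
    also have "\<dots> \<le> card (H \<inter> calPi n) * n ^ 2"
      using card_alt_group_Int_calPi_ge[of n] n 2 by simp
    also have "\<dots> \<le> card (H \<inter> calPi n) * n ^ 3" by (rule n_pow) simp
    finally show ?thesis .
  next
    case (3 A)
    have "fact (n div 2) * fact (n div 2) \<le> fact (card A) * (fact (n - card A) :: nat)"
      using fact_square_le_fact_mult_fact[of "card A" m] 3(4) m by simp
    also have "\<dots> \<le> card (H \<inter> calPi n) * n ^ 3"
      using card_set_stabilizer_Int_calPi_ge[of n A] n 3 by simp
    finally show ?thesis .
  qed
qed

lemma card_partition_stabilizer_Int_calPi_le:
  assumes "block_partition n k l P"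
  shows "card (partition_stabilizer n P \<inter> calPi n) \<le> fact l * fact k ^ l"
proof -
  have "finite (partition_stabilizer n P)"
    using finite_permutations[of "{1..n}"]
    by (rule rev_finite_subset) (auto simp: partition_stabilizer_def sym_group_carrier)
  then have "card (partition_stabilizer n P \<inter> calPi n) \<le> card (partition_stabilizer n P)"
    by (intro card_mono) auto
  also have "\<dots> \<le> fact l * fact k ^ l"
    using card_partition_stabilizer_le[of n P k] assms by (simp add: block_partition_def)
  finally show ?thesis .
qed

theorem lemma3p10:
  fixes n :: nat and M :: "(nat \<Rightarrow> nat) set"
  assumes "n > 30" and "n mod 6 = 0"
    and "maximal_subgroup (sym_group n) M"
    and "imprimitive_stab n M"
    and "M \<notin> calH n"
  shows "\<forall>H\<in>calH n. card (M \<inter> calPi n) < card (H \<inter> calPi n)"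
proof
  fix H assume H: "H \<in> calH n"
  have n: "36 \<le> n" "even n" using assms(1,2) by presburger+
  obtain k l P where kl: "k * l = n" "2 \<le> k" "2 \<le> l" and P: "block_partition n k l P"
    and M: "M = partition_stabilizer n P"
    using assms(4) by (auto simp: imprimitive_stab_def)
  have "l \<noteq> 2" using assms(5) kl(1) P M by (auto simp: calH_def)
  then have "fact l * fact k ^ l * n ^ 3 < fact (n div 2) * fact (n div 2)"
    using fact_blocks_lt_fact_half_square[OF n(1) assms(2) kl(1,2)] kl(3) by simp
  also have "\<dots> \<le> card (H \<inter> calPi n) * n ^ 3" using card_calH_Int_calPi_ge[OF n H] .
  finally have "card (M \<inter> calPi n) * n ^ 3 < card (H \<inter> calPi n) * n ^ 3"
    using card_partition_stabilizer_Int_calPi_le[OF P] M by (meson le_less_trans mult_le_mono1)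
  then show "card (M \<inter> calPi n) < card (H \<inter> calPi n)" by simp
qed

end
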